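(* Let $\Gamma=(V,E)$ be a finite simple graph with $V=\{1,\dots,n\}$ and let $A_\Gamma^+$ be the associated right-angled Artin monoid. Let $F\subset A_\Gamma^+$ be a finite subset such that $\vee F\neq\infty$, i.e. $\bigcap_{x\in F} xA_\Gamma^+\neq\emptyset$. Suppose $I\in V$ is an initial vertex of some $x\in F$. Then for each $y\in F$, either $I$ is an initial vertex of $y$, or $I$ is adjacent in $\Gamma$ to every vertex $I(y_j)$ of every syllable $y_j$ of $y$.
   Context: The right-angled Artin monoid is $A_\Gamma^+=\langle e_1,\dots,e_n : e_ie_j=e_je_i \text{ whenever } ij\in E\rangle$, with identity $1$. Every $x\neq 1$ can be written $x=x_1x_2\cdots x_m$ with syllables $x_j=e_{i_j}^{a_j}$, $a_j\ge 1$; the vertex of the syllable $x_j$ is $I(x_j)=i_j$. A shuffle of such an expression swaps two adjacent syllables $x_j,x_{j+1}$ whose vertices are adjacent in $\Gamma$; an amalgamation merges two consecutive syllables with the same vertex into one. An expression is reduced if no sequence of shuffles produces an expression admitting an amalgamation. A vertex $i$ is an initial vertex of $x$ if some reduced expression $x=x_1\cdots x_m$ has $x_1=e_i^{a_1}$ with $a_1\ge1$. For a finite $F\subset A_\Gamma^+$, one writes $\vee F=\infty$ if $\bigcap_{x\in F}xA_\Gamma^+=\emptyset$; otherwise this intersection equals $rA_\Gamma^+$ for a unique $r$, and $\vee F=r$. *)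

theory Defs
  imports Main
begin

definition simple_graph :: "nat \<Rightarrow> (nat \<Rightarrow> nat \<Rightarrow> bool) \<Rightarrow> bool" where
  "simple_graph n E \<longleftrightarrow> (\<forall>i j. E i j \<longrightarrow> E j i) \<and> (\<forall>i. \<not> E i i)
     \<and> (\<forall>i j. E i j \<longrightarrow> i \<in> {1..n} \<and> j \<in> {1..n})"

text \<open>Words over the generators e_1..e_n; the monoid A_Gamma^+ is the set of such
words modulo the congruence generated by e_i e_j = e_j e_i for ij in E.\<close>
definition word :: "nat \<Rightarrow> nat list \<Rightarrow> bool" where
  "word n w \<longleftrightarrow> set w \<subseteq> {1..n}"

definition comm_step :: "(nat \<Rightarrow> nat \<Rightarrow> bool) \<Rightarrow> nat list \<Rightarrow> nat list \<Rightarrow> bool" where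
  "comm_step E u v \<longleftrightarrow> (\<exists>p q i j. E i j \<and> u = p @ [i, j] @ q \<and> v = p @ [j, i] @ q)"

definition raam_eq :: "(nat \<Rightarrow> nat \<Rightarrow> bool) \<Rightarrow> nat list \<Rightarrow> nat list \<Rightarrow> bool" where
  "raam_eq E = equivclp (comm_step E)"

definition right_ideal :: "nat \<Rightarrow> (nat \<Rightarrow> nat \<Rightarrow> bool) \<Rightarrow> nat list \<Rightarrow> nat list set" where
  "right_ideal n E x = {w. word n w \<and> (\<exists>z. word n z \<and> raam_eq E w (x @ z))}"

definition join_finite :: "nat \<Rightarrow> (nat \<Rightarrow> nat \<Rightarrow> bool) \<Rightarrow> nat list set \<Rightarrow> bool" where
  "join_finite n E F \<longleftrightarrow> (\<Inter>x\<in>F. right_ideal n E x) \<noteq> {}"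

text \<open>Syllable expressions: lists of syllables (vertex, exponent) meaning e_i^a.\<close>
type_synonym syll_expr = "(nat \<times> nat) list"

definition eval_expr :: "syll_expr \<Rightarrow> nat list" where
  "eval_expr s = concat (map (\<lambda>(i, a). replicate a i) s)"

definition is_expr :: "nat \<Rightarrow> (nat \<Rightarrow> nat \<Rightarrow> bool) \<Rightarrow> nat list \<Rightarrow> syll_expr \<Rightarrow> bool" where
  "is_expr n E x s \<longleftrightarrow> (\<forall>(i, a) \<in> set s. i \<in> {1..n} \<and> a \<ge> 1) \<and> raam_eq E (eval_expr s) x"

definition shuffle :: "(nat \<Rightarrow> nat \<Rightarrow> bool) \<Rightarrow> syll_expr \<Rightarrow> syll_expr \<Rightarrow> bool" where
  "shuffle E s t \<longleftrightarrow> (\<exists>p q i a j b. E i j \<and> s = p @ [(i, a), (j, b)] @ q \<and> t = p @ [(j, b), (i, a)] @ q)"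

definition admits_amalgamation :: "syll_expr \<Rightarrow> bool" where
  "admits_amalgamation s \<longleftrightarrow> (\<exists>p q i a b. s = p @ [(i, a), (i, b)] @ q)"

definition reduced :: "(nat \<Rightarrow> nat \<Rightarrow> bool) \<Rightarrow> syll_expr \<Rightarrow> bool" where
  "reduced E s \<longleftrightarrow> (\<forall>t. (shuffle E)\<^sup>*\<^sup>* s t \<longrightarrow> \<not> admits_amalgamation t)"

definition initial_vertex :: "nat \<Rightarrow> (nat \<Rightarrow> nat \<Rightarrow> bool) \<Rightarrow> nat \<Rightarrow> nat list \<Rightarrow> bool" where
  "initial_vertex n E i x \<longleftrightarrow>
     (\<exists>s. is_expr n E x s \<and> reduced E s \<and> s \<noteq> [] \<and> fst (hd s) = i \<and> snd (hd s) \<ge> 1)"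

end

theory Submission
  imports Defs
begin

text \<open>Call a letter a movable to the front of a word w if a occurs in w and commutes with
every letter preceding its first occurrence. This property is invariant under the commutation
relations, so it holds whenever w is equivalent to a word beginning with a. A common right
multiple of the elements of F is equivalent both to a word x z, which begins with I, and to a word
y z'; so I is movable to the front of y z'. Either I occurs in y, and then it is movable to the
front of y itself, so that a shortest (hence reduced) syllable expression of y can be shuffled to
begin with an I-syllable; or I does not occur in y, and then it commutes with every letter of y.\<close>

lemma raam_eq_refl: "raam_eq E u u"
  unfolding raam_eq_def by simp

lemma raam_eq_sym: "raam_eq E u v \<Longrightarrow> raam_eq E v u"
  unfolding raam_eq_def by (rule equivclp_sym)

lemma raam_eq_trans: "raam_eq E u v \<Longrightarrow> raam_eq E v w \<Longrightarrow> raam_eq E u w"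
  unfolding raam_eq_def by (rule equivclp_trans)

lemma raam_eq_swap: "E i j \<Longrightarrow> raam_eq E (p @ i # j # q) (p @ j # i # q)"
  unfolding raam_eq_def comm_step_def by (intro r_into_equivclp) auto

lemma comm_step_append: "comm_step E u v \<Longrightarrow> comm_step E (l @ u @ r) (l @ v @ r)"
  unfolding comm_step_def by (metis append.assoc)

lemma raam_eq_append: "raam_eq E u v \<Longrightarrow> raam_eq E (l @ u @ r) (l @ v @ r)"
  unfolding raam_eq_def
  by (induction rule: equivclp_induct) (auto intro: equivclp_into_equivclp comm_step_append)

lemma raam_eq_append_right: "raam_eq E u v \<Longrightarrow> raam_eq E (u @ r) (v @ r)"
  using raam_eq_append[of E u v "[]" r] by simp

lemma raam_eq_Cons: "raam_eq E u v \<Longrightarrow> raam_eq E (a # u) (a # v)"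
  using raam_eq_append[of E u v "[a]" "[]"] by simp

lemma comm_step_set: "comm_step E u v \<Longrightarrow> set u = set v"
  unfolding comm_step_def by auto

lemma raam_eq_set: "raam_eq E u v \<Longrightarrow> set u = set v"
  unfolding raam_eq_def
  by (induction rule: equivclp_induct) (auto dest: comm_step_set)

lemma raam_eq_move_to_front:
  assumes "\<forall>j\<in>set p. E j a"
  shows "raam_eq E (p @ a # q) (a # p @ q)"
  using assms
proof (induction p)
  case Nil
  then show ?case by (simp add: raam_eq_refl)
next
  case (Cons j p)
  then have "raam_eq E (j # p @ a # q) (j # a # p @ q)"
    by (simp add: raam_eq_Cons)
  moreover have "raam_eq E (j # a # p @ q) (a # j # p @ q)"
    using Cons.prems raam_eq_swap[of E j a "[]"] by simp
  ultimately show ?case by (simp add: raam_eq_trans)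
qed

lemma raam_eq_commute:
  assumes "\<forall>i\<in>set u. \<forall>j\<in>set v. E j i"
  shows "raam_eq E (v @ u) (u @ v)"
  using assms
proof (induction u)
  case Nil
  then show ?case by (simp add: raam_eq_refl)
next
  case (Cons a u)
  then have "raam_eq E (v @ a # u) (a # v @ u)"
    by (simp add: raam_eq_move_to_front)
  moreover have "raam_eq E (a # v @ u) (a # u @ v)"
    using Cons by (simp add: raam_eq_Cons)
  ultimately show ?case by (simp add: raam_eq_trans)
qed

definition movable_to_front :: "(nat \<Rightarrow> nat \<Rightarrow> bool) \<Rightarrow> nat \<Rightarrow> nat list \<Rightarrow> bool" where
  "movable_to_front E a w \<longleftrightarrow> a \<in> set w \<and> (\<forall>j\<in>set (takeWhile (\<lambda>c. c \<noteq> a) w). E a j)"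

lemma takeWhile_neq_append:
  "a \<notin> set u \<Longrightarrow> takeWhile (\<lambda>c. c \<noteq> a) (u @ v) = u @ takeWhile (\<lambda>c. c \<noteq> a) v"
  by (rule takeWhile_append2) auto

lemma movable_to_front_Cons: "movable_to_front E a (a # w)"
  unfolding movable_to_front_def by simp

lemma movable_to_front_comm_step:
  assumes "symp E" and "comm_step E u v" and "movable_to_front E a u"
  shows "movable_to_front E a v"
proof -
  obtain p q i j where ij: "E i j" "E j i" and u: "u = p @ [i, j] @ q" and v: "v = p @ [j, i] @ q"
    using assms(1,2) unfolding comm_step_def by (blast dest: sympD)
  show ?thesis
  proof (cases "a \<in> set p")
    case True
    then show ?thesis using assms(3) unfolding movable_to_front_def u v
      by (auto simp: takeWhile_append1)
  next
    case False
    then show ?thesis using assms(3) ij unfolding movable_to_front_def u v takeWhile_neq_append[OF False]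
      by (cases "i = a"; cases "j = a") auto
  qed
qed

lemma movable_to_front_raam_eq:
  assumes "symp E" and "raam_eq E u v" and "movable_to_front E a u"
  shows "movable_to_front E a v"
proof -
  have comm_step_sym: "comm_step E v u" if "comm_step E u v" for u v
    using that assms(1) unfolding comm_step_def by (blast dest: sympD)
  from assms(2,3) show ?thesis
    unfolding raam_eq_def
  proof (induction rule: equivclp_induct)
    case (step v w)
    then show ?case
      using comm_step_sym movable_to_front_comm_step[OF assms(1)] by blast
  qed
qed

lemma movable_to_front_if_raam_eq_Cons:
  assumes "symp E" and "raam_eq E w (a # w')"
  shows "movable_to_front E a w"
  using assms movable_to_front_Cons movable_to_front_raam_eq raam_eq_sym by blast

lemma movable_to_front_append:
  assumes "movable_to_front E a (u @ v)"
  shows "movable_to_front E a u \<or> (\<forall>j\<in>set u. E a j)"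
proof (cases "a \<in> set u")
  case True
  then show ?thesis using assms unfolding movable_to_front_def by (simp add: takeWhile_append1)
next
  case False
  then show ?thesis using assms unfolding movable_to_front_def by (simp add: takeWhile_neq_append)
qed

lemma eval_expr_Nil [simp]: "eval_expr [] = []"
  unfolding eval_expr_def by simp

lemma eval_expr_Cons [simp]: "eval_expr ((i, a) # s) = replicate a i @ eval_expr s"
  unfolding eval_expr_def by simp

lemma eval_expr_append [simp]: "eval_expr (s @ t) = eval_expr s @ eval_expr t"
  unfolding eval_expr_def by simp

lemma set_eval_expr: "set (eval_expr s) = {i. \<exists>a. (i, a) \<in> set s \<and> a > 0}"
  by (induction s) auto

lemma is_expr_vertex_in_set:
  assumes "is_expr n E y s" and "(j, a) \<in> set s"
  shows "j \<in> set y"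
proof -
  have "j \<in> set (eval_expr s)"
    using assms unfolding is_expr_def set_eval_expr by fastforce
  then show ?thesis
    using assms(1) raam_eq_set unfolding is_expr_def by blast
qed

lemma raam_eq_shuffle:
  assumes "shuffle E s t"
  shows "raam_eq E (eval_expr s) (eval_expr t)"
proof -
  obtain p q i a j b where "E i j"
    and s: "s = p @ [(i, a), (j, b)] @ q" and t: "t = p @ [(j, b), (i, a)] @ q"
    using assms unfolding shuffle_def by blast
  then have "raam_eq E (replicate a i @ replicate b j) (replicate b j @ replicate a i)"
    by (intro raam_eq_commute) simp
  then show ?thesis
    unfolding s t by (auto dest: raam_eq_append[where l = "eval_expr p" and r = "eval_expr q"])
qed

lemma raam_eq_shuffles: "(shuffle E)\<^sup>*\<^sup>* s t \<Longrightarrow> raam_eq E (eval_expr s) (eval_expr t)"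
  by (induction rule: rtranclp_induct) (auto intro: raam_eq_refl raam_eq_trans raam_eq_shuffle)

lemma shuffle_set_length: "shuffle E s t \<Longrightarrow> set s = set t \<and> length s = length t"
  unfolding shuffle_def by auto

lemma shuffles_set_length: "(shuffle E)\<^sup>*\<^sup>* s t \<Longrightarrow> set s = set t \<and> length s = length t"
  by (induction rule: rtranclp_induct) (auto dest: shuffle_set_length)

lemma is_expr_shuffles:
  assumes "is_expr n E y s" and "(shuffle E)\<^sup>*\<^sup>* s t"
  shows "is_expr n E y t"
proof -
  have "raam_eq E (eval_expr t) y"
    using assms raam_eq_shuffles raam_eq_sym raam_eq_trans unfolding is_expr_def by blast
  then show ?thesis
    using assms(1) shuffles_set_length[OF assms(2)] unfolding is_expr_def by simp
qed

lemma reduced_shuffles: "reduced E s \<Longrightarrow> (shuffle E)\<^sup>*\<^sup>* s t \<Longrightarrow> reduced E t"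
  unfolding reduced_def by (meson rtranclp_trans)

lemma shuffle_Cons:
  assumes "shuffle E s t"
  shows "shuffle E (x # s) (x # t)"
proof -
  obtain p q i a j b where "E i j" "s = p @ [(i, a), (j, b)] @ q" "t = p @ [(j, b), (i, a)] @ q"
    using assms unfolding shuffle_def by blast
  moreover have "shuffle E ((x # p) @ [(i, a), (j, b)] @ q) ((x # p) @ [(j, b), (i, a)] @ q)"
    using \<open>E i j\<close> unfolding shuffle_def by blast
  ultimately show ?thesis
    by simp
qed

lemma shuffles_Cons: "(shuffle E)\<^sup>*\<^sup>* s t \<Longrightarrow> (shuffle E)\<^sup>*\<^sup>* (x # s) (x # t)"
  by (induction rule: rtranclp_induct) (auto intro: rtranclp.rtrancl_into_rtrancl shuffle_Cons)

lemma shuffles_move_to_front: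
  assumes "\<forall>(j, a)\<in>set p. E j i"
  shows "(shuffle E)\<^sup>*\<^sup>* (p @ (i, c) # q) ((i, c) # p @ q)"
  using assms
proof (induction p)
  case (Cons x p)
  obtain j a where x: "x = (j, a)" by fastforce
  have "(shuffle E)\<^sup>*\<^sup>* (x # p @ (i, c) # q) (x # (i, c) # p @ q)"
    using Cons by (auto intro: shuffles_Cons)
  moreover have "shuffle E ([] @ [(j, a), (i, c)] @ p @ q) ([] @ [(i, c), (j, a)] @ p @ q)"
    using Cons.prems x unfolding shuffle_def by fastforce
  ultimately show ?case
    using x by simp
qed simp

lemma shortest_expr_reduced:
  assumes s: "is_expr n E y s" and shortest: "\<forall>t. is_expr n E y t \<longrightarrow> length s \<le> length t"
  shows "reduced E s"
  unfolding reduced_def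
proof (intro allI impI notI)
  fix t assume st: "(shuffle E)\<^sup>*\<^sup>* s t" and "admits_amalgamation t"
  then obtain p q i a b where t: "t = p @ [(i, a), (i, b)] @ q"
    unfolding admits_amalgamation_def by blast
  have "eval_expr (p @ [(i, a + b)] @ q) = eval_expr t"
    unfolding t by (simp add: replicate_add)
  then have "is_expr n E y (p @ [(i, a + b)] @ q)"
    using is_expr_shuffles[OF s st] unfolding is_expr_def t by auto
  then have "length s \<le> length (p @ [(i, a + b)] @ q)"
    using shortest by blast
  moreover have "length s = length t"
    using shuffles_set_length[OF st] by simp
  ultimately show False
    unfolding t by simp
qed

lemma ex_reduced_expr:
  assumes "word n y"
  shows "\<exists>s. is_expr n E y s \<and> reduced E s"
proof -
  have "eval_expr (map (\<lambda>i. (i, 1)) y) = y"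
    by (induction y) auto
  then have "is_expr n E y (map (\<lambda>i. (i, 1)) y)"
    using assms unfolding is_expr_def word_def by (auto simp: raam_eq_refl)
  then obtain s where "is_expr n E y s" and "\<forall>t. is_expr n E y t \<longrightarrow> length s \<le> length t"
    using ex_has_least_nat[of "is_expr n E y" _ length] by blast
  then show ?thesis
    using shortest_expr_reduced by blast
qed

lemma initial_vertex_raam_eq_Cons:
  assumes "initial_vertex n E i x"
  shows "\<exists>x'. raam_eq E x (i # x')"
proof -
  obtain s where s: "is_expr n E x s" and "s \<noteq> []" "fst (hd s) = i" "snd (hd s) \<ge> 1"
    using assms unfolding initial_vertex_def by blast
  then obtain c s' where "s = (i, Suc c) # s'"
    by (cases s) (auto dest: Suc_le_D)
  then show ?thesis
    using s unfolding is_expr_def by (auto intro: raam_eq_sym)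
qed

lemma initial_vertex_if_movable_to_front:
  assumes "symp E" and "word n y" and "movable_to_front E i y"
  shows "initial_vertex n E i y"
proof -
  obtain s where s: "is_expr n E y s" and red: "reduced E s"
    using ex_reduced_expr[OF assms(2)] by blast
  have movable: "movable_to_front E i (eval_expr s)"
    using movable_to_front_raam_eq[OF assms(1)] assms(3) s raam_eq_sym
    unfolding is_expr_def by blast
  then have "\<exists>x\<in>set s. fst x = i"
    unfolding movable_to_front_def set_eval_expr by force
  then obtain p x q where "s = p @ x # q" "fst x = i" and not_in_p: "\<forall>x\<in>set p. fst x \<noteq> i"
    using split_list_first_prop[of s "\<lambda>x. fst x = i"] by blast
  then obtain c where s_split: "s = p @ (i, c) # q"
    by (cases x) simp
  have exponents: "\<forall>(j, a)\<in>set (p @ (i, c) # q). a \<ge> 1"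
    using s unfolding is_expr_def s_split by blast
  then obtain c' where "c = Suc c'"
    by (cases c) auto
  moreover have "i \<notin> set (eval_expr p)"
    using not_in_p unfolding set_eval_expr by force
  ultimately have "\<forall>j\<in>set (eval_expr p). E i j"
    using movable unfolding movable_to_front_def s_split by (simp add: takeWhile_neq_append)
  then have "\<forall>(j, a)\<in>set p. E j i"
    using exponents assms(1) unfolding set_eval_expr by (fastforce dest: sympD)
  then have shuffles: "(shuffle E)\<^sup>*\<^sup>* s ((i, c) # p @ q)"
    unfolding s_split by (rule shuffles_move_to_front)
  show ?thesis
    unfolding initial_vertex_def
    using is_expr_shuffles[OF s shuffles] reduced_shuffles[OF red shuffles] \<open>c = Suc c'\<close>
    by fastforce
qed

theorem lemma2p2:
  fixes n :: nat and E :: "nat \<Rightarrow> nat \<Rightarrow> bool" and F :: "nat list set" and I :: nat and x :: "nat list"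
  assumes "simple_graph n E"
    and "finite F" and "\<forall>w\<in>F. word n w"
    and "join_finite n E F"
    and "x \<in> F" and "initial_vertex n E I x"
  shows "\<forall>y\<in>F. initial_vertex n E I y \<or>
           (\<forall>s. is_expr n E y s \<longrightarrow> (\<forall>(j, a) \<in> set s. E I j))"
proof
  fix y assume "y \<in> F"
  have symp: "symp E"
    using assms(1) unfolding simple_graph_def by (simp add: sympI)
  obtain x' where x: "raam_eq E x (I # x')"
    using initial_vertex_raam_eq_Cons[OF assms(6)] by blast
  obtain w where "w \<in> (\<Inter>x\<in>F. right_ideal n E x)"
    using assms(4) unfolding join_finite_def by blast
  then have "w \<in> right_ideal n E x" and "w \<in> right_ideal n E y"
    using assms(5) \<open>y \<in> F\<close> by blast+
  then obtain z z' where "raam_eq E w (x @ z)" and w: "raam_eq E w (y @ z')"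
    unfolding right_ideal_def by blast
  then have "raam_eq E w (I # x' @ z)"
    using raam_eq_append_right[OF x] raam_eq_trans by fastforce
  then have "movable_to_front E I (y @ z')"
    using movable_to_front_raam_eq[OF symp w] movable_to_front_if_raam_eq_Cons[OF symp] by blast
  then consider "movable_to_front E I y" | "\<forall>j\<in>set y. E I j"
    using movable_to_front_append by blast
  then show "initial_vertex n E I y \<or> (\<forall>s. is_expr n E y s \<longrightarrow> (\<forall>(j, a) \<in> set s. E I j))"
  proof cases
    case 1
    then show ?thesis
      using initial_vertex_if_movable_to_front[OF symp] assms(3) \<open>y \<in> F\<close> by blast
  next
    case 2
    then show ?thesis
      using is_expr_vertex_in_set by fast
  qed
qed

end
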